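(* Let $p(\cdot)\in\mathcal P^{\log}_\pm(\mathbb B)$, $k\in(0,\tfrac12)$ and $w\in B_{p(\cdot)}$. There is a constant $C>0$ such that for every non-negative measurable $g$ with $\|g\|_{p(\cdot),w}=1$ and every $z\in\mathbb B$, $$\big(R^\alpha_kg(z)\big)^{p(z)}\le C\big(R^\alpha_k(g^{p(\cdot)})(z)+1\big).$$
   Context: $\mathbb B$ unit ball of $\mathbb C^n$, $\alpha>0$, $d\mu_\alpha(z)=(1-|z|^2)^{\alpha-1}d\mu(z)$. Pseudo-distance $d(z,\zeta)=\big||z|-|\zeta|\big|+\big|1-\frac{\langle z,\zeta\rangle}{|z||\zeta|}\big|$ ($z,\zeta\ne0$), $d(z,\zeta)=|z|+|\zeta|$ otherwise; pseudo-balls $B(z,r)=\{\zeta:d(z,\zeta)<r\}$; $\mathcal B$ = pseudo-balls $B(z,r)$ with $r>1-|z|$. $\mathcal P^{\log}_\pm(\mathbb B)$: measurable $p$ with $\operatorname{ess\,inf}p>1$ and $|p(z)-p(\zeta)|\le c/\ln(e+1/d(z,\zeta))$ for some $c$, all $z\ne\zeta$; $1/p+1/p'=1$. For a weight $v$ (or $v\equiv1$, written $\|\cdot\|_{p(\cdot)}$): $\|f\|_{p(\cdot),v}=\inf\{\lambda>0:\int|f/\lambda|^{p(z)}v\,d\mu_\alpha\le1\}$. $w\in B_{p(\cdot)}$ iff $\sup_{B\in\mathcal B}\frac1{\mu_\alpha(B)}\|w^{1/p(\cdot)}\chi_B\|_{p(\cdot)}\|w^{-1/p(\cdot)}\chi_B\|_{p'(\cdot)}<\infty$.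 $B^k(z)=\{\zeta\in\mathbb B:d(z,\zeta)<k(1-|z|)\}$, $R^\alpha_kf(z)=\frac1{\mu_\alpha(B^k(z))}\int_{B^k(z)}f\,d\mu_\alpha$. *)

theory Defs
  imports "HOL-Analysis.Analysis"
begin

type_synonym 'n cvec = "complex ^ 'n"

definition unitB :: "('n::finite) cvec set" where
  "unitB = ball 0 1"

definition hinner :: "('n::finite) cvec \<Rightarrow> 'n cvec \<Rightarrow> complex" where
  "hinner z y = (\<Sum>i\<in>UNIV. z $ i * cnj (y $ i))"

definition pdist :: "('n::finite) cvec \<Rightarrow> 'n cvec \<Rightarrow> real" where
  "pdist z y = (if z \<noteq> 0 \<and> y \<noteq> 0
     then \<bar>norm z - norm y\<bar> + cmod (1 - hinner z y / complex_of_real (norm z * norm y))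
     else norm z + norm y)"

definition pball :: "('n::finite) cvec \<Rightarrow> real \<Rightarrow> 'n cvec set" where
  "pball z r = {y \<in> unitB. pdist z y < r}"

text \<open>dmu: normalized Lebesgue (volume) measure on the unit ball;
  dmu_alpha = (1-|z|^2)^(alpha-1) dmu.\<close>
definition mu_alpha :: "real \<Rightarrow> ('n::finite) cvec measure" where
  "mu_alpha \<alpha> = density lborel
     (\<lambda>z. ennreal (indicator unitB z * (1 - (norm z)\<^sup>2) powr (\<alpha> - 1)
                   / measure lborel (unitB :: 'n cvec set)))"

text \<open>Weighted variable-exponent Luxemburg norm (value \<infinity> if no admissible lambda).\<close>
definition vnorm :: "real \<Rightarrow> (('n::finite) cvec \<Rightarrow> real) \<Rightarrow> ('n cvec \<Rightarrow> real)
                     \<Rightarrow> ('n cvec \<Rightarrow> real) \<Rightarrow> ennreal" where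
  "vnorm \<alpha> p v f = Inf {ennreal t | t. t > 0 \<and>
      (\<integral>\<^sup>+ z. ennreal (\<bar>f z / t\<bar> powr p z * v z) \<partial>mu_alpha \<alpha>) \<le> 1}"

definition Plog :: "real \<Rightarrow> (('n::finite) cvec \<Rightarrow> real) \<Rightarrow> bool" where
  "Plog \<alpha> p \<longleftrightarrow> p \<in> borel_measurable lborel
     \<and> (\<exists>p0 > 1. AE z in mu_alpha \<alpha>. p z \<ge> p0)
     \<and> (\<exists>c. \<forall>z\<in>unitB. \<forall>y\<in>unitB. z \<noteq> y \<longrightarrow>
             \<bar>p z - p y\<bar> \<le> c / ln (exp 1 + 1 / pdist z y))"

definition conj_exp :: "real \<Rightarrow> real" where
  "conj_exp q = q / (q - 1)"

definition weight :: "real \<Rightarrow> (('n::finite) cvec \<Rightarrow> real) \<Rightarrow> bool" where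
  "weight \<alpha> w \<longleftrightarrow> w \<in> borel_measurable lborel \<and> (\<forall>z. w z \<ge> 0)
     \<and> (AE z in mu_alpha \<alpha>. w z > 0)"

definition Bp_class :: "real \<Rightarrow> (('n::finite) cvec \<Rightarrow> real) \<Rightarrow> ('n cvec \<Rightarrow> real) \<Rightarrow> bool" where
  "Bp_class \<alpha> p w \<longleftrightarrow> weight \<alpha> w \<and> (\<exists>M. \<forall>z\<in>unitB. \<forall>r. r > 1 - norm z \<longrightarrow>
      (1 / emeasure (mu_alpha \<alpha>) (pball z r))
       * vnorm \<alpha> p (\<lambda>_. 1) (\<lambda>y. w y powr (1 / p y) * indicator (pball z r) y)
       * vnorm \<alpha> (\<lambda>y. conj_exp (p y)) (\<lambda>_. 1)
              (\<lambda>y. w y powr (- 1 / p y) * indicator (pball z r) y)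
       \<le> ennreal M)"

definition Bk :: "real \<Rightarrow> ('n::finite) cvec \<Rightarrow> 'n cvec set" where
  "Bk k z = {y \<in> unitB. pdist z y < k * (1 - norm z)}"

definition Rk :: "real \<Rightarrow> real \<Rightarrow> (('n::finite) cvec \<Rightarrow> real) \<Rightarrow> 'n cvec \<Rightarrow> ennreal" where
  "Rk \<alpha> k f z = (\<integral>\<^sup>+ y \<in> Bk k z. ennreal (f y) \<partial>mu_alpha \<alpha>) / emeasure (mu_alpha \<alpha>) (Bk k z)"

end

theory Submission
  imports Defs
begin

text \<open>
  Fix z, let t = 1 - |z| and let A be the average R_k g(z). Testing the B_p condition on the
  pseudo-ball B(0,4), which is the whole unit ball, shows that the dual modular of w^(-1/p) is
  finite; by Young's inequality every g of weighted norm 1 then has integral at most some C0 over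
  the ball. The set B^k(z) contains a Euclidean ball of radius (kt)^2/64 on which the density of
  mu_alpha is of order t^max(alpha-1,0), so mu_alpha(B^k(z)) >= c t^N and A <= (C0/c) t^(-N).
  The log-Hoelder condition gives p >= p(z) - D on B^k(z) with D = c'/ln(e + 1/(kt)), so Jensen's
  inequality for the exponent q = max(p0, p(z) - D) yields A^q <= R_k(g^p)(z) + 1, while A^D stays
  bounded because D ln A <= c'(|ln(C0/c)| + N). As p(z) <= q + D, this controls A^p(z) when A > 1.
\<close>

lemma unit_interval_powr_le:
  fixes u \<delta> a :: real
  assumes "0 < \<delta>" "\<delta> \<le> u" "u \<le> 1"
  shows "u powr (a - 1) \<le> (1 / \<delta>) powr max (1 - a) 0"
proof (cases "a \<ge> 1")
  case True
  then show ?thesis using assms by (simp add: powr_le1)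
next
  case False
  have "u powr (a - 1) = (1 / u) powr (1 - a)"
    using assms by (simp add: powr_divide powr_minus_divide[symmetric])
  also have "\<dots> \<le> (1 / \<delta>) powr (1 - a)"
    using False assms by (intro powr_mono2 divide_left_mono) auto
  finally show ?thesis using False by simp
qed

lemma unit_interval_powr_ge:
  fixes u \<delta> a :: real
  assumes "0 < \<delta>" "\<delta> \<le> u" "u \<le> 1"
  shows "\<delta> powr max (a - 1) 0 \<le> u powr (a - 1)"
proof (cases "a \<ge> 1")
  case True
  then show ?thesis using assms by (simp add: powr_mono2)
next
  case False
  then have "1 \<le> u powr (a - 1)" using powr_mono2'[of "a - 1" u 1] assms by simp
  then show ?thesis using False by simp
qed

lemma powr_le_powr_plus_1:
  fixes x q r :: real
  assumes "0 \<le> x" "0 \<le> q" "q \<le> r"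
  shows "x powr q \<le> x powr r + 1"
proof (cases "x \<le> 1")
  case True
  then have "x powr q \<le> 1" using assms by (intro powr_le1) auto
  then show ?thesis using powr_ge_zero[of x r] by linarith
next
  case False
  then have "x powr q \<le> x powr r" using assms(3) by (intro powr_mono) auto
  then show ?thesis by simp
qed

lemma ln_exp1_plus_ge_1: "0 \<le> (x::real) \<Longrightarrow> 1 \<le> ln (exp 1 + x)"
  using ln_mono[of "exp 1" "exp 1 + x"] by simp

lemma powr_tangent_le:
  fixes q A x :: real
  assumes "1 \<le> q" "0 < A" "0 \<le> x"
  shows "q * A powr (q - 1) * x \<le> x powr q + (q - 1) * A powr q"
proof (cases "x = 0")
  case False
  have "q * A powr (q - 1) * (x - A) \<le> x powr q - A powr q"
  proof (rule convex_on_imp_above_tangent[where A = "{0<..}"])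
    show "convex_on {0<..} (\<lambda>x. x powr q)" using assms(1) by (rule powr_convex)
    show "((\<lambda>x. x powr q) has_field_derivative q * A powr (q - 1)) (at A within {0<..})"
      using has_real_derivative_powr[OF assms(2)] by (rule has_field_derivative_at_within)
  qed (use assms False in \<open>auto simp: interior_open\<close>)
  moreover have "A powr (q - 1) * A = A powr q" using assms(2) by (simp add: powr_mult_base mult.commute)
  then have "q * A powr (q - 1) * (x - A) = q * A powr (q - 1) * x - q * A powr q"
    by (simp add: right_diff_distrib mult.assoc)
  moreover have "(q - 1) * A powr q = q * A powr q - A powr q" by (simp add: algebra_simps)
  ultimately show ?thesis by linarith
qed (use assms in simp)

lemma young_weighted:
  fixes q w g t s :: real
  assumes "1 < q" "0 < w" "0 \<le> g" "0 < t" "0 < s"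
  shows "g \<le> t * s * (\<bar>g / t\<bar> powr q * w + \<bar>w powr (- 1 / q) / s\<bar> powr conj_exp q)"
proof -
  define a where "a = g / t * w powr (1 / q)"
  define b where "b = w powr (- 1 / q) / s"
  have q': "1 < conj_exp q" "1 / q + 1 / conj_exp q = 1"
    using assms(1) by (auto simp: conj_exp_def field_simps)
  have aq: "a powr q = \<bar>g / t\<bar> powr q * w"
    using assms unfolding a_def by (subst powr_mult) (auto simp: powr_powr)
  have "g / (t * s) = a * b"
    using assms by (simp add: a_def b_def field_simps powr_add[symmetric])
  also have "\<dots> \<le> a powr q / q + b powr conj_exp q / conj_exp q"
    using assms q' by (intro Youngs_inequality) (auto simp: a_def b_def)
  also have "\<dots> \<le> a powr q + b powr conj_exp q"
    using assms q' by (intro add_mono) (auto simp: a_def b_def divide_le_eq mult_le_cancel_left1)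
  also have "\<dots> = \<bar>g / t\<bar> powr q * w + \<bar>w powr (- 1 / q) / s\<bar> powr conj_exp q"
    using aq assms by (simp add: b_def)
  finally show ?thesis using assms by (simp add: divide_le_eq mult.commute)
qed

lemma powr_log_decay_le:
  fixes A K N c s t :: real
  assumes "1 < A" "A \<le> K / t powr N" "0 < K" "0 \<le> N" "0 \<le> c" "0 < s" "s \<le> t" "t \<le> 1"
  shows "A powr (c / ln (exp 1 + 1 / s)) \<le> exp (c * (\<bar>ln K\<bar> + N))"
proof -
  define L where "L = ln (exp 1 + 1 / s)"
  have L: "1 \<le> L" using assms by (simp add: L_def ln_exp1_plus_ge_1)
  have "- ln t = ln (1 / t)" using assms by (simp add: ln_div)
  also have "\<dots> \<le> L"
    unfolding L_def using assms by (intro ln_mono) (auto simp: frac_le intro: add_increasing)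
  finally have t: "- ln t \<le> L" .
  have "ln A \<le> ln (K / t powr N)" using assms by (intro ln_mono) auto
  also have "\<dots> = ln K + N * (- ln t)" using assms by (simp add: ln_div ln_powr)
  also have "\<dots> \<le> \<bar>ln K\<bar> + N * L" using t assms(4) by (intro add_mono mult_left_mono) auto
  finally have "c / L * ln A \<le> c / L * (\<bar>ln K\<bar> + N * L)"
    using assms(5) L by (intro mult_left_mono) auto
  also have "\<dots> = c * (\<bar>ln K\<bar> / L) + c * N" using L by (simp add: field_simps)
  also have "\<dots> \<le> c * (\<bar>ln K\<bar> + N)"
  proof -
    have "\<bar>ln K\<bar> / L \<le> \<bar>ln K\<bar>" using L by (simp add: divide_le_eq mult_le_cancel_left1)
    then have "c * (\<bar>ln K\<bar> / L) \<le> c * \<bar>ln K\<bar>" using assms(5) by (rule mult_left_mono)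
    then show ?thesis by (simp add: distrib_left)
  qed
  finally show ?thesis using assms(1) by (simp add: powr_def L_def mult.commute)
qed

lemma ennreal_powr_le_split:
  fixes A r q \<Delta> E :: real and X :: ennreal
  assumes "0 \<le> A" "0 \<le> r" "r \<le> q + \<Delta>" "1 \<le> E"
    and "1 < A \<Longrightarrow> A powr \<Delta> \<le> E" and "ennreal (A powr q) \<le> X + 1"
  shows "ennreal (A powr r) \<le> ennreal E * (X + 1)"
proof (cases "A \<le> 1")
  case True
  then have "ennreal (A powr r) \<le> 1" using assms(1,2) by (simp add: powr_le1)
  also have "1 \<le> ennreal E * (X + 1)" using mult_mono[of 1 "ennreal E" 1 "X + 1"] assms(4) by simp
  finally show ?thesis .
next
  case False
  then have "A powr r \<le> A powr q * A powr \<Delta>" using assms(3) by (simp add: powr_mono flip: powr_add)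
  also have "\<dots> \<le> A powr q * E" using assms(5) False by (intro mult_left_mono) auto
  finally have "ennreal (A powr r) \<le> ennreal (A powr q) * ennreal E"
    using assms(4) by (simp add: ennreal_leI flip: ennreal_mult)
  also have "\<dots> \<le> (X + 1) * ennreal E" using assms(6) by (rule mult_right_mono) simp
  finally show ?thesis by (simp add: mult.commute)
qed

lemma AE_positive_measure_witness:
  assumes "AE x in M. P x" and "0 < emeasure M A"
  obtains x where "x \<in> A" "P x"
proof (rule ccontr)
  assume "\<not> thesis"
  with that have "AE x in M. \<not> x \<in> A" using assms(1) by (auto elim: AE_mp)
  then have "emeasure M {x \<in> space M. x \<in> A} = 0" by (rule emeasure_eq_0_AE)
  moreover have "A \<in> sets M" using assms(2) emeasure_notin_sets by force
  ultimately show False using assms(2) sets.sets_into_space by (simp add: Int_absorb1 Int_def[symmetric])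
qed

lemma emeasure_annulus_le:
  assumes "0 \<le> r" "r \<le> 1"
  shows "emeasure lborel (ball (0::'a::euclidean_space) 1 - ball 0 r)
           \<le> ennreal (unit_ball_vol DIM('a) * DIM('a) * (1 - r))"
proof -
  have "emeasure lborel (ball (0::'a) 1 - ball 0 r)
        = emeasure lborel (ball (0::'a) 1) - emeasure lborel (ball (0::'a) r)"
    using assms by (intro emeasure_Diff) (auto simp: emeasure_ball)
  also have "\<dots> = ennreal (unit_ball_vol DIM('a) * (1 - r ^ DIM('a)))"
    using assms by (simp add: emeasure_ball ennreal_minus[symmetric] algebra_simps)
  also have "\<dots> \<le> ennreal (unit_ball_vol DIM('a) * DIM('a) * (1 - r))"
  proof (intro ennreal_leI)
    have "1 - r ^ DIM('a) \<le> DIM('a) * (1 - r)"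
      using Bernoulli_inequality[of "r - 1" "DIM('a)"] assms by (simp add: algebra_simps)
    then show "unit_ball_vol DIM('a) * (1 - r ^ DIM('a)) \<le> unit_ball_vol DIM('a) * DIM('a) * (1 - r)"
      by (simp add: mult.assoc mult_left_mono)
  qed
  finally show ?thesis .
qed

lemma dyadic_index_exists:
  fixes r :: real
  assumes "0 \<le> r" "r < 1"
  obtains j where "1 - (1/2) ^ j \<le> r" "r < 1 - (1/2) ^ Suc j"
proof -
  obtain i where "(1/2::real) ^ i < 1 - r"
    using real_arch_pow_inv[of "1 - r" "1/2"] assms by auto
  then have ex: "\<exists>i. r < 1 - (1/2::real) ^ i" by (intro exI[of _ i]) linarith
  define i where "i = (LEAST i. r < 1 - (1/2::real) ^ i)"
  have i: "r < 1 - (1/2) ^ i" unfolding i_def by (rule LeastI_ex[OF ex])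
  then obtain j where j: "i = Suc j" using assms(1) by (cases i) auto
  then have "\<not> r < 1 - (1/2) ^ j"
    using not_less_Least[of j "\<lambda>i. r < 1 - (1/2) ^ i"] unfolding i_def by auto
  then show ?thesis using i j by (intro that[of j]) (auto simp: not_less)
qed

definition dyadic_shell :: "nat \<Rightarrow> 'a::euclidean_space set" where
  "dyadic_shell j = ball 0 (1 - (1/2) ^ Suc j) - ball 0 (1 - (1/2) ^ j)"

lemma dyadic_shell_sets [measurable]: "dyadic_shell j \<in> sets borel"
  unfolding dyadic_shell_def by simp

lemma nn_integral_dyadic_shell_le:
  fixes a :: real
  defines "b \<equiv> max (1 - a) 0"
  shows "(\<integral>\<^sup>+ x \<in> (dyadic_shell j :: 'a::euclidean_space set). ennreal ((1 - (norm x)\<^sup>2) powr (a - 1)) \<partial>lborel)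
           \<le> ennreal (2 powr b * unit_ball_vol DIM('a) * DIM('a) * (2 powr (b - 1)) ^ j)"
    (is "?I \<le> _")
proof -
  define V where "V = unit_ball_vol DIM('a) * DIM('a)"
  have "?I \<le> (\<integral>\<^sup>+ x. ennreal ((2 ^ Suc j) powr b) * indicator (dyadic_shell j :: 'a set) x \<partial>lborel)"
  proof (intro nn_integral_mono)
    fix x :: 'a
    show "ennreal ((1 - (norm x)\<^sup>2) powr (a - 1)) * indicator (dyadic_shell j) x
          \<le> ennreal ((2 ^ Suc j) powr b) * indicator (dyadic_shell j) x"
    proof (cases "x \<in> dyadic_shell j")
      case True
      then have x: "norm x < 1 - (1/2) ^ Suc j" unfolding dyadic_shell_def by simp
      have "norm x < 1" using x zero_less_power[of "1/2::real" "Suc j"] by linarith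
      then have "(norm x)\<^sup>2 \<le> norm x" by (simp add: power2_eq_square mult_left_le_one_le)
      then have "(1/2::real) ^ Suc j \<le> 1 - (norm x)\<^sup>2" using x by linarith
      then have "(1 - (norm x)\<^sup>2) powr (a - 1) \<le> (1 / (1/2) ^ Suc j) powr b"
        unfolding b_def by (intro unit_interval_powr_le) auto
      then show ?thesis using True by (simp add: power_one_over ennreal_leI)
    qed simp
  qed
  also have "\<dots> = ennreal ((2 ^ Suc j) powr b) * emeasure lborel (dyadic_shell j :: 'a set)"
    by (simp add: nn_integral_cmult_indicator)
  also have "\<dots> \<le> ennreal ((2 ^ Suc j) powr b) * ennreal (V * (1/2) ^ j)"
  proof (intro mult_left_mono)
    have "emeasure lborel (dyadic_shell j :: 'a set) \<le> emeasure lborel (ball (0::'a) 1 - ball 0 (1 - (1/2) ^ j))"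
      unfolding dyadic_shell_def by (intro emeasure_mono) auto
    also have "\<dots> \<le> ennreal (V * (1/2) ^ j)"
      using emeasure_annulus_le[of "1 - (1/2) ^ j"] by (simp add: V_def power_le_one)
    finally show "emeasure lborel (dyadic_shell j :: 'a set) \<le> ennreal (V * (1/2) ^ j)" .
  qed simp
  also have "\<dots> = ennreal (2 powr b * V * (2 powr (b - 1)) ^ j)"
  proof -
    have "((2::real) ^ Suc j) powr b = 2 powr b * (2 powr b) ^ j"
      by (simp add: powr_realpow[symmetric] powr_mult powr_powr powr_power mult.commute)
    then have "(2 ^ Suc j) powr b * (V * (1/2) ^ j) = 2 powr b * V * ((2 powr b) ^ j * (1/2) ^ j)"
      by (simp add: ac_simps)
    also have "\<dots> = 2 powr b * V * (2 powr (b - 1)) ^ j"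
      by (simp add: power_mult_distrib[symmetric] powr_diff)
    finally show ?thesis by (simp add: V_def flip: ennreal_mult)
  qed
  finally show ?thesis unfolding V_def by (simp only: mult.assoc)
qed

lemma nn_integral_unit_ball_powr_finite:
  fixes a :: real
  assumes "0 < a"
  shows "(\<integral>\<^sup>+ x \<in> ball (0::'a::euclidean_space) 1. ennreal ((1 - (norm x)\<^sup>2) powr (a - 1)) \<partial>lborel) < \<infinity>"
proof -
  define b where "b = max (1 - a) 0"
  define K where "K j = 2 powr b * unit_ball_vol DIM('a) * DIM('a) * (2 powr (b - 1)) ^ j" for j
  define f where "f x = ennreal ((1 - (norm x)\<^sup>2) powr (a - 1))" for x :: 'a
  have "(\<integral>\<^sup>+ x \<in> ball 0 1. f x \<partial>lborel) \<le> (\<integral>\<^sup>+ x. (\<Sum>j. f x * indicator (dyadic_shell j) x) \<partial>lborel)"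
  proof (intro nn_integral_mono)
    fix x :: 'a
    show "f x * indicator (ball 0 1) x \<le> (\<Sum>j. f x * indicator (dyadic_shell j) x)"
    proof (cases "norm x < 1")
      case True
      then obtain j where "1 - (1/2) ^ j \<le> norm x" "norm x < 1 - (1/2) ^ Suc j"
        by (rule dyadic_index_exists[OF norm_ge_zero])
      then have "x \<in> dyadic_shell j" by (simp add: dyadic_shell_def)
      then have "f x * indicator (ball 0 1) x = f x * indicator (dyadic_shell j) x"
        using True by simp
      then show ?thesis by (metis ennreal_suminf_lessD not_le order_less_irrefl)
    qed simp
  qed
  also have "\<dots> = (\<Sum>j. \<integral>\<^sup>+ x \<in> dyadic_shell j. f x \<partial>lborel)"
    unfolding f_def by (rule nn_integral_suminf) measurable
  also have "\<dots> \<le> (\<Sum>j. ennreal (K j))"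
    unfolding f_def K_def b_def by (intro suminf_le nn_integral_dyadic_shell_le) auto
  also have "\<dots> < \<infinity>"
  proof -
    have "b - 1 < 0" using assms by (simp add: b_def)
    then have "2 powr (b - 1) < 1" by (simp add: powr_less_one)
    then have "summable K" unfolding K_def by (intro summable_mult summable_geometric) simp
    moreover have "0 \<le> K j" for j by (simp add: K_def)
    ultimately show ?thesis by (simp add: less_top ennreal_suminf_neq_top)
  qed
  finally show ?thesis unfolding f_def .
qed

lemma set_nn_integral_powr_jensen:
  fixes M :: "'a measure" and g :: "'a \<Rightarrow> real"
  assumes S: "S \<in> sets M" "emeasure M S = ennreal m" "0 < m"
    and g: "g \<in> borel_measurable M" "\<And>y. 0 \<le> g y"
    and I: "(\<integral>\<^sup>+ y \<in> S. ennreal (g y) \<partial>M) = ennreal I" "0 \<le> I"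
    and q: "1 \<le> q"
  shows "ennreal ((I / m) powr q * m) \<le> (\<integral>\<^sup>+ y \<in> S. ennreal (g y powr q) \<partial>M)"
proof (cases "I = 0")
  case False
  define A where "A = I / m"
  define c where "c = (q - 1) * A powr q"
  have A: "0 < A" using False I(2) S(3) by (simp add: A_def)
  have c: "0 \<le> c" using q by (simp add: c_def)
  \<comment> \<open>integrate the tangent line of \<open>x powr q\<close> at the mean value A\<close>
  have "ennreal (q * A powr (q - 1)) * ennreal I
        = (\<integral>\<^sup>+ y \<in> S. ennreal (q * A powr (q - 1)) * ennreal (g y) \<partial>M)"
    unfolding I(1)[symmetric] using g S
    by (subst nn_integral_cmult[symmetric]) (auto simp: mult.assoc)
  also have "\<dots> \<le> (\<integral>\<^sup>+ y \<in> S. ennreal (g y powr q) + ennreal c \<partial>M)"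
    using powr_tangent_le[OF q A g(2)] q A c g(2)
    by (intro nn_integral_mono) (auto simp: c_def indicator_def ennreal_mult[symmetric] simp flip: ennreal_plus)
  also have "\<dots> = (\<integral>\<^sup>+ y \<in> S. ennreal (g y powr q) \<partial>M) + ennreal (c * m)"
    using S g c by (simp add: distrib_right nn_integral_add nn_integral_cmult_indicator ennreal_mult)
  finally have *: "ennreal (q * A powr (q - 1) * I) \<le> (\<integral>\<^sup>+ y \<in> S. ennreal (g y powr q) \<partial>M) + ennreal (c * m)"
    using q A I(2) by (simp add: ennreal_mult)
  have pow: "A powr (q - 1) * A = A powr q" using A by (simp add: powr_mult_base mult.commute)
  have "I = A * m" using S(3) by (simp add: A_def)
  then have "q * A powr (q - 1) * I = q * (A powr (q - 1) * A) * m" by (simp add: mult.assoc)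
  also have "\<dots> = A powr q * m + c * m" unfolding pow by (simp add: c_def algebra_simps)
  finally have "q * A powr (q - 1) * I = A powr q * m + c * m" .
  with * have "ennreal (c * m) + ennreal (A powr q * m) \<le> ennreal (c * m) + (\<integral>\<^sup>+ y \<in> S. ennreal (g y powr q) \<partial>M)"
    using S(3) c by (simp add: add.commute flip: ennreal_plus)
  then show ?thesis unfolding A_def by (simp add: ennreal_add_left_cancel_le)
qed simp

lemma set_average_powr_le:
  fixes M :: "'a measure" and g p :: "'a \<Rightarrow> real"
  assumes S: "S \<in> sets M" "emeasure M S = ennreal m" "0 < m"
    and g: "g \<in> borel_measurable M" "\<And>y. 0 \<le> g y" and p: "p \<in> borel_measurable M"
    and I: "(\<integral>\<^sup>+ y \<in> S. ennreal (g y) \<partial>M) = ennreal I" "0 \<le> I"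
    and q: "1 \<le> q" "\<And>y. y \<in> S \<Longrightarrow> q \<le> p y"
  shows "ennreal ((I / m) powr q) \<le> (\<integral>\<^sup>+ y \<in> S. ennreal (g y powr p y) \<partial>M) / emeasure M S + 1"
proof -
  have "ennreal ((I / m) powr q) * ennreal m \<le> (\<integral>\<^sup>+ y \<in> S. ennreal (g y powr q) \<partial>M)"
    using set_nn_integral_powr_jensen[OF S g I q(1)] S(3) by (simp add: ennreal_mult)
  also have "\<dots> \<le> (\<integral>\<^sup>+ y \<in> S. ennreal (g y powr p y) + 1 \<partial>M)"
  proof (intro nn_integral_mono)
    fix y
    have "g y powr q \<le> g y powr p y + 1" if "y \<in> S"
      using g(2) q(1) q(2)[OF that] by (intro powr_le_powr_plus_1) auto
    then have "ennreal (g y powr q) \<le> ennreal (g y powr p y + 1)" if "y \<in> S"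
      using that by (simp add: ennreal_leI del: ennreal_plus)
    then show "ennreal (g y powr q) * indicator S y \<le> (ennreal (g y powr p y) + 1) * indicator S y"
      by (auto simp: indicator_def)
  qed
  also have "\<dots> = (\<integral>\<^sup>+ y \<in> S. ennreal (g y powr p y) \<partial>M) + ennreal m"
    using S g p by (simp add: distrib_right nn_integral_add)
  finally have "ennreal ((I / m) powr q) * ennreal m \<le> (\<integral>\<^sup>+ y \<in> S. ennreal (g y powr p y) \<partial>M) + ennreal m" .
  then have "ennreal ((I / m) powr q) * ennreal m / ennreal m
             \<le> ((\<integral>\<^sup>+ y \<in> S. ennreal (g y powr p y) \<partial>M) + ennreal m) / ennreal m"
    by (rule divide_right_mono_ennreal)
  then show ?thesis using S by (simp add: mult_divide_eq_ennreal add_divide_distrib_ennreal divide_ennreal)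
qed

section \<open>The measure mu_alpha\<close>

definition mu_alpha_dens :: "real \<Rightarrow> ('n::finite) cvec \<Rightarrow> real" where
  "mu_alpha_dens \<alpha> z = indicator unitB z * (1 - (norm z)\<^sup>2) powr (\<alpha> - 1)
                         / measure lborel (unitB :: 'n cvec set)"

lemma unitB_sets [measurable]: "(unitB :: ('n::finite) cvec set) \<in> sets borel"
  unfolding unitB_def by simp

lemma measure_unitB: "measure lborel (unitB :: ('n::finite) cvec set) = unit_ball_vol DIM('n cvec)"
  unfolding unitB_def by (simp add: measure_def emeasure_ball)

lemma measure_unitB_pos: "measure lborel (unitB :: ('n::finite) cvec set) > 0"
  unfolding measure_unitB by simp

lemma sets_mu_alpha [measurable_cong]: "sets (mu_alpha \<alpha> :: ('n::finite) cvec measure) = sets borel"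
  unfolding mu_alpha_def by simp

lemma mu_alpha_dens_measurable [measurable]: "mu_alpha_dens \<alpha> \<in> borel_measurable borel"
  unfolding mu_alpha_dens_def by measurable

lemma mu_alpha_dens_pos:
  fixes z :: "('n::finite) cvec"
  assumes "z \<in> unitB" shows "mu_alpha_dens \<alpha> z > 0"
proof -
  have "0 < 1 - (norm z)\<^sup>2" using assms by (simp add: unitB_def abs_square_less_1)
  then show ?thesis using assms measure_unitB_pos[where 'n='n] by (simp add: mu_alpha_dens_def)
qed

lemma mu_alpha_dens_ge:
  fixes y :: "('n::finite) cvec"
  assumes "0 < \<delta>" "\<delta> \<le> 1 - norm y"
  shows "\<delta> powr max (\<alpha> - 1) 0 / measure lborel (unitB :: 'n cvec set) \<le> mu_alpha_dens \<alpha> y"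
proof -
  have y: "norm y < 1" using assms by linarith
  then have "norm y * norm y \<le> norm y" by (intro mult_left_le_one_le) auto
  then have "\<delta> \<le> 1 - (norm y)\<^sup>2" using assms by (simp add: power2_eq_square)
  then have "\<delta> powr max (\<alpha> - 1) 0 \<le> (1 - (norm y)\<^sup>2) powr (\<alpha> - 1)"
    using assms(1) by (intro unit_interval_powr_ge) auto
  then show ?thesis
    using y measure_unitB_pos[where 'n='n] by (simp add: mu_alpha_dens_def unitB_def divide_right_mono)
qed

lemma emeasure_mu_alpha:
  "A \<in> sets borel \<Longrightarrow>
     emeasure (mu_alpha \<alpha>) A = (\<integral>\<^sup>+ x. ennreal (mu_alpha_dens \<alpha> x) * indicator A x \<partial>lborel)"
  unfolding mu_alpha_def mu_alpha_dens_def by (subst emeasure_density) auto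

lemma emeasure_mu_alpha_ge:
  assumes "S \<in> sets borel" and "\<And>y. y \<in> S \<Longrightarrow> c \<le> mu_alpha_dens \<alpha> y"
  shows "ennreal c * emeasure lborel S \<le> emeasure (mu_alpha \<alpha>) (S :: ('n::finite) cvec set)"
proof -
  have "ennreal c * emeasure lborel S = (\<integral>\<^sup>+ x. ennreal c * indicator S x \<partial>lborel)"
    using assms(1) by (simp add: nn_integral_cmult_indicator)
  also have "\<dots> \<le> (\<integral>\<^sup>+ x. ennreal (mu_alpha_dens \<alpha> x) * indicator S x \<partial>lborel)"
    by (intro nn_integral_mono) (auto simp: indicator_def assms(2) intro: ennreal_leI)
  finally show ?thesis using assms(1) by (simp add: emeasure_mu_alpha)
qed

lemma emeasure_mu_alpha_pos:
  assumes "S \<in> sets borel" "S \<subseteq> unitB" and "emeasure lborel S > 0"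
  shows "emeasure (mu_alpha \<alpha>) (S :: ('n::finite) cvec set) > 0"
proof (rule ccontr)
  assume "\<not> ?thesis"
  then have "(\<integral>\<^sup>+ x. ennreal (mu_alpha_dens \<alpha> x) * indicator S x \<partial>lborel) = 0"
    using assms(1) by (simp add: emeasure_mu_alpha)
  then have "AE x in lborel. ennreal (mu_alpha_dens \<alpha> x) * indicator S x = 0"
    using assms(1) by (simp add: nn_integral_0_iff_AE)
  then have "AE x in lborel. x \<notin> S"
  proof (rule AE_mp, intro AE_I2 impI notI)
    fix x assume "ennreal (mu_alpha_dens \<alpha> x) * indicator S x = 0" "x \<in> S"
    then show False using assms(2) mu_alpha_dens_pos[of x \<alpha>] by auto
  qed
  then have "emeasure lborel S = 0"
    using assms(1) by (simp add: AE_iff_measurable[OF _ refl])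
  with assms(3) show False by simp
qed

lemma emeasure_mu_alpha_unitB_pos: "emeasure (mu_alpha \<alpha>) (unitB :: ('n::finite) cvec set) > 0"
  by (rule emeasure_mu_alpha_pos) (auto simp: unitB_def emeasure_ball)

lemma emeasure_mu_alpha_unitB_finite:
  assumes "0 < \<alpha>" shows "emeasure (mu_alpha \<alpha>) (unitB :: ('n::finite) cvec set) < \<infinity>"
proof -
  define V where "V = measure lborel (unitB :: 'n cvec set)"
  have V: "0 < V" unfolding V_def by (rule measure_unitB_pos)
  have "ennreal (mu_alpha_dens \<alpha> x) * indicator unitB x
        = ennreal (1 / V) * (ennreal ((1 - (norm x)\<^sup>2) powr (\<alpha> - 1)) * indicator (ball 0 1) x)"
    for x :: "'n cvec"
    unfolding mu_alpha_dens_def V_def[symmetric]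
    using V by (simp add: unitB_def indicator_def ennreal_mult[symmetric])
  then have "emeasure (mu_alpha \<alpha>) (unitB :: 'n cvec set)
        = (\<integral>\<^sup>+ x. ennreal (1 / V)
              * (ennreal ((1 - (norm x)\<^sup>2) powr (\<alpha> - 1)) * indicator (ball (0::'n cvec) 1) x) \<partial>lborel)"
    by (simp add: emeasure_mu_alpha)
  also have "\<dots> = ennreal (1 / V) * (\<integral>\<^sup>+ x. ennreal ((1 - (norm x)\<^sup>2) powr (\<alpha> - 1))
                                         * indicator (ball (0::'n cvec) 1) x \<partial>lborel)"
    unfolding unitB_def[symmetric] by (rule nn_integral_cmult) measurable
  also have "\<dots> < \<infinity>"
    using nn_integral_unit_ball_powr_finite[OF assms, where 'a="'n cvec"]
    by (simp add: ennreal_mult_less_top)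
  finally show ?thesis .
qed

section \<open>The pseudo-distance and pseudo-balls\<close>

lemma hinner_norm_le: "cmod (hinner x y) \<le> norm x * norm (y :: ('n::finite) cvec)"
proof -
  have "cmod (hinner x y) \<le> (\<Sum>i\<in>UNIV. \<bar>cmod (x $ i)\<bar> * \<bar>cmod (y $ i)\<bar>)"
    unfolding hinner_def by (rule order_trans[OF norm_sum]) (simp add: norm_mult)
  also have "\<dots> \<le> L2_set (\<lambda>i. cmod (x $ i)) UNIV * L2_set (\<lambda>i. cmod (y $ i)) UNIV"
    by (rule L2_set_mult_ineq)
  finally show ?thesis by (simp add: norm_vec_def)
qed

lemma Re_hinner: "Re (hinner x y) = inner x (y :: ('n::finite) cvec)"
  unfolding hinner_def inner_vec_def inner_complex_def by (simp add: Re_sum)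

lemma hinner_self: "hinner x x = of_real ((norm (x :: ('n::finite) cvec))\<^sup>2)"
proof -
  have "x $ i * cnj (x $ i) = of_real ((cmod (x $ i))\<^sup>2)" for i
    by (metis complex_norm_square)
  then show ?thesis
    unfolding hinner_def norm_vec_def L2_set_def by (simp add: sum_nonneg of_real_sum)
qed

lemma hinner_diff_right: "hinner x (y - u) = hinner x y - hinner x (u :: ('n::finite) cvec)"
  unfolding hinner_def by (simp add: sum_subtractf algebra_simps)

lemma hinner_scaleR_left: "hinner (c *\<^sub>R x) y = of_real c * hinner x (y :: ('n::finite) cvec)"
  unfolding hinner_def vector_scaleR_component by (simp add: sum_distrib_left scaleR_conv_of_real mult_ac)

lemma hinner_normalized_scaleR_left:
  assumes "0 < c"
  shows "hinner (c *\<^sub>R x) y / of_real (norm (c *\<^sub>R x) * norm y) = hinner x y / of_real (norm x * norm (y :: ('n::finite) cvec))"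
  using assms by (simp add: hinner_scaleR_left)

lemma angle_term_le:
  fixes x y :: "('n::finite) cvec"
  assumes "x \<noteq> 0" "y \<noteq> 0"
  shows "cmod (1 - hinner x y / of_real (norm x * norm y)) \<le> 2 * norm (y - x) / norm y"
proof -
  define P where "P = complex_of_real (norm x * norm y)"
  have P: "P \<noteq> 0" "cmod P = norm x * norm y" unfolding P_def using assms by (auto simp: norm_mult)
  have "P - hinner x y = of_real (norm x) * of_real (norm y - norm x) + hinner x (x - y)"
    unfolding P_def hinner_diff_right hinner_self by (simp add: algebra_simps power2_eq_square)
  then have "cmod (P - hinner x y) \<le> cmod (of_real (norm x) * of_real (norm y - norm x)) + cmod (hinner x (x - y))"
    by (simp only: norm_triangle_ineq)
  also have "\<dots> \<le> norm x * \<bar>norm y - norm x\<bar> + norm x * norm (x - y)"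
    using hinner_norm_le[of x "x - y"] by (simp add: norm_mult del: of_real_diff)
  also have "\<dots> \<le> 2 * norm x * norm (y - x)"
    using norm_triangle_ineq3[of y x] by (simp add: norm_minus_commute mult_left_mono)
  finally have num: "cmod (P - hinner x y) \<le> 2 * norm x * norm (y - x)" .
  have "1 - hinner x y / P = (P - hinner x y) / P" using P by (simp add: field_simps)
  then have "cmod (1 - hinner x y / P) = cmod (P - hinner x y) / (norm x * norm y)"
    using P by (simp add: norm_divide)
  also have "\<dots> \<le> 2 * norm x * norm (y - x) / (norm x * norm y)"
    by (rule divide_right_mono[OF num]) simp
  also have "\<dots> = 2 * norm (y - x) / norm y" using assms by simp
  finally show ?thesis unfolding P_def .
qed

lemma pdist_nonneg: "0 \<le> pdist z y"
  unfolding pdist_def by auto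

lemma pdist_eq_0_imp_eq: "pdist z y = 0 \<Longrightarrow> y = (z :: ('n::finite) cvec)"
proof (cases "z \<noteq> 0 \<and> y \<noteq> 0")
  case True
  assume "pdist z y = 0"
  then have ny: "norm y = norm z" and "hinner z y = of_real (norm z * norm y)"
    using True by (auto simp: pdist_def add_nonneg_eq_0_iff field_simps)
  then have "inner z y = (norm z)\<^sup>2" by (metis Re_hinner Re_complex_of_real power2_eq_square)
  moreover have "inner y y = inner z z" using ny by (simp flip: power2_norm_eq_inner)
  ultimately have "(norm (z - y))\<^sup>2 = 0"
    by (simp add: power2_norm_eq_inner inner_diff_left inner_diff_right inner_commute)
  then show ?thesis by simp
qed (auto simp: pdist_def add_nonneg_eq_0_iff)

lemma pdist_measurable [measurable]: "pdist z \<in> borel_measurable (borel :: ('n::finite) cvec measure)"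
proof -
  have "(\<lambda>y. hinner z y) \<in> borel_measurable (borel :: 'n cvec measure)"
    unfolding hinner_def by (intro borel_measurable_continuous_onI continuous_intros)
  then show ?thesis unfolding pdist_def by measurable
qed

lemma pball_sets [measurable]: "pball z r \<in> sets (borel :: ('n::finite) cvec measure)"
proof -
  have "pball z r = unitB \<inter> {y. pdist z y < r}" unfolding pball_def by auto
  then show ?thesis by simp
qed

lemma Bk_eq_pball: "Bk k z = pball z (k * (1 - norm z))"
  unfolding Bk_def pball_def ..

lemma Bk_sets [measurable]: "Bk k z \<in> sets (borel :: ('n::finite) cvec measure)"
  unfolding Bk_eq_pball by simp

lemma pball_subset_unitB: "pball z r \<subseteq> unitB"
  unfolding pball_def by auto

lemma pball_0_4: "pball (0::('n::finite) cvec) 4 = unitB"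
  unfolding pball_def unitB_def pdist_def by auto

lemma pdist_lt_near_ray:
  fixes z y u :: "('n::finite) cvec"
  assumes u: "norm u = 1" "z = norm z *\<^sub>R u" and e: "0 < e" "e \<le> 1"
    and y: "norm (y - (norm z + e / 2) *\<^sub>R u) < e\<^sup>2 / 64"
  shows "pdist z y < e" "norm y < norm z + e"
proof -
  define x where "x = (norm z + e / 2) *\<^sub>R u"
  have nx: "norm x = norm z + e / 2" unfolding x_def using u e by simp
  then have "0 < norm x" using e norm_ge_zero[of z] by linarith
  then have x0: "x \<noteq> 0" by auto
  have small: "e\<^sup>2 / 64 \<le> e / 64" using e by (simp add: power2_eq_square mult_left_le_one_le)
  have dy: "norm (y - x) < e\<^sup>2 / 64" using y by (simp add: x_def)
  have ny: "\<bar>norm y - norm x\<bar> < e\<^sup>2 / 64" using norm_triangle_ineq3[of y x] dy by linarith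
  then have nylow: "e / 4 < norm y" using nx small e norm_ge_zero[of z] by linarith
  then have y0: "y \<noteq> 0" using e by auto
  have "cmod (1 - hinner z y / of_real (norm z * norm y)) \<le> e / 8" if z0: "z \<noteq> 0"
  proof -
    \<comment> \<open>z and x point in the same direction, and y is close to x\<close>
    have "hinner z y / of_real (norm z * norm y) = hinner u y / of_real (norm u * norm y)"
      using hinner_normalized_scaleR_left[of "norm z" u y] z0 by (simp flip: u(2))
    also have "\<dots> = hinner x y / of_real (norm x * norm y)"
      using hinner_normalized_scaleR_left[of "norm z + e / 2" u y] e norm_ge_zero[of z]
      unfolding x_def by simp
    finally have "cmod (1 - hinner z y / of_real (norm z * norm y))
                  = cmod (1 - hinner x y / of_real (norm x * norm y))" by simp
    also have "\<dots> \<le> 2 * norm (y - x) / norm y"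
      using x0 y0 by (rule angle_term_le)
    also have "\<dots> \<le> 2 * (e\<^sup>2 / 64) / (e / 4)"
      using dy nylow e by (intro frac_le) auto
    also have "\<dots> = e / 8" using e by (simp add: power2_eq_square)
    finally show ?thesis .
  qed
  moreover have near: "norm y - norm z < e / 2 + e / 64" "norm z - norm y < e / 2 + e / 64"
    using ny nx small by (simp_all only: abs_less_iff) linarith+
  then have "\<bar>norm z - norm y\<bar> < e / 2 + e / 64" unfolding abs_less_iff by linarith
  ultimately show "pdist z y < e" using e y0 near by (auto simp: pdist_def)
  show "norm y < norm z + e" using near e by linarith
qed

lemma ball_subset_pball:
  fixes z :: "('n::finite) cvec"
  assumes z: "z \<in> unitB" and e: "0 < e" "e \<le> 1 - norm z"
  obtains x where "ball x (e\<^sup>2 / 64) \<subseteq> pball z e" "\<And>y. y \<in> ball x (e\<^sup>2 / 64) \<Longrightarrow> norm y < norm z + e"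
proof -
  obtain u :: "'n cvec" where u: "norm u = 1" "z = norm z *\<^sub>R u"
  proof (cases "z = 0")
    case True
    then show ?thesis using that vector_choose_size[of 1] by auto
  next
    case False
    then show ?thesis using that[of "(1 / norm z) *\<^sub>R z"] by simp
  qed
  have "e \<le> 1" using e norm_ge_zero[of z] by linarith
  then have close: "pdist z y < e" "norm y < norm z + e" if "y \<in> ball ((norm z + e / 2) *\<^sub>R u) (e\<^sup>2 / 64)" for y
    using pdist_lt_near_ray[OF u e(1)] that by (auto simp: dist_norm norm_minus_commute)
  have "ball ((norm z + e / 2) *\<^sub>R u) (e\<^sup>2 / 64) \<subseteq> pball z e"
    using close e by (force simp: pball_def unitB_def)
  with close show ?thesis by (intro that) auto
qed

lemma emeasure_pball_pos:
  fixes z :: "('n::finite) cvec"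
  assumes "z \<in> unitB" "0 < e" "e \<le> 1 - norm z"
  shows "0 < emeasure (mu_alpha \<alpha>) (pball z e)"
proof -
  obtain x where x: "ball x (e\<^sup>2 / 64) \<subseteq> pball z e" using ball_subset_pball[OF assms] by blast
  have "0 < emeasure (mu_alpha \<alpha>) (ball x (e\<^sup>2 / 64))"
    using x pball_subset_unitB assms(2) by (intro emeasure_mu_alpha_pos) (auto simp: emeasure_ball)
  also have "\<dots> \<le> emeasure (mu_alpha \<alpha>) (pball z e)"
    using x by (intro emeasure_mono) (auto simp: sets_mu_alpha)
  finally show ?thesis .
qed

lemma emeasure_Bk_ge:
  assumes "0 < k" "k \<le> 1/2"
  obtains c N where "0 < c" "0 \<le> N"
    "\<And>z :: ('n::finite) cvec. z \<in> unitB \<Longrightarrow>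
       ennreal (c * (1 - norm z) powr N) \<le> emeasure (mu_alpha \<alpha>) (Bk k z)"
proof
  define \<beta> where "\<beta> = max (\<alpha> - 1) 0"
  define D where "D = DIM('n cvec)"
  define V where "V = measure lborel (unitB :: 'n cvec set)"
  have V: "0 < V" "V = unit_ball_vol D" unfolding V_def D_def by (simp_all add: measure_unitB)
  show "0 < (1/2) powr \<beta> * (k\<^sup>2 / 64) ^ D" using assms by simp
  show "0 \<le> \<beta> + 2 * real D" by (simp add: \<beta>_def)
  fix z :: "'n cvec" assume z: "z \<in> unitB"
  define t where "t = 1 - norm z"
  have t: "0 < t" "t \<le> 1" using z by (auto simp: t_def unitB_def)
  define \<rho> where "\<rho> = (k * t)\<^sup>2 / 64"
  obtain x where x: "ball x \<rho> \<subseteq> Bk k z" "\<And>y. y \<in> ball x \<rho> \<Longrightarrow> norm y < norm z + k * t"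
    using ball_subset_pball[OF z, of "k * t"] assms t
    by (auto simp: Bk_eq_pball \<rho>_def t_def mult_le_one)
  have dens: "(t / 2) powr \<beta> / V \<le> mu_alpha_dens \<alpha> y" if y: "y \<in> ball x \<rho>" for y
  proof -
    have "k * t \<le> t / 2" using assms t by (simp add: mult_right_mono)
    then have "t / 2 \<le> 1 - norm y" using x(2)[OF y] by (simp add: t_def)
    then show ?thesis using t unfolding \<beta>_def V_def by (intro mu_alpha_dens_ge) auto
  qed
  have "t powr (\<beta> + 2 * real D) = t powr \<beta> * (t\<^sup>2) ^ D"
    using t powr_realpow[of t "2 * D"] by (simp add: powr_add power_mult)
  moreover have "(t / 2) powr \<beta> = (1/2) powr \<beta> * t powr \<beta>"
    using t powr_mult[of "1/2" t \<beta>] by simp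
  ultimately have "(1/2) powr \<beta> * (k\<^sup>2 / 64) ^ D * t powr (\<beta> + 2 * real D) = (t / 2) powr \<beta> / V * (V * \<rho> ^ D)"
    using V(1) by (simp add: \<rho>_def power_mult_distrib power_divide)
  moreover have "emeasure lborel (ball x \<rho>) = ennreal (V * \<rho> ^ D)"
    using V by (simp add: emeasure_ball D_def \<rho>_def)
  ultimately have "ennreal ((1/2) powr \<beta> * (k\<^sup>2 / 64) ^ D * t powr (\<beta> + 2 * real D))
             = ennreal ((t / 2) powr \<beta> / V) * emeasure lborel (ball x \<rho>)"
    using V(1) by (simp add: \<rho>_def flip: ennreal_mult)
  also have "\<dots> \<le> emeasure (mu_alpha \<alpha>) (ball x \<rho>)"
    using dens by (intro emeasure_mu_alpha_ge) auto
  also have "\<dots> \<le> emeasure (mu_alpha \<alpha>) (Bk k z)"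
    using x(1) by (intro emeasure_mono) (auto simp: sets_mu_alpha)
  finally show "ennreal ((1/2) powr \<beta> * (k\<^sup>2 / 64) ^ D * (1 - norm z) powr (\<beta> + 2 * real D))
                \<le> emeasure (mu_alpha \<alpha>) (Bk k z)"
    by (simp add: t_def)
qed

section \<open>Log-Hoelder exponents\<close>

lemma Plog_oscillation:
  fixes p :: "('n::finite) cvec \<Rightarrow> real"
  assumes "Plog \<alpha> p"
  obtains c where "0 \<le> c"
    "\<And>z y r. z \<in> unitB \<Longrightarrow> y \<in> unitB \<Longrightarrow> pdist z y < r \<Longrightarrow> \<bar>p z - p y\<bar> \<le> c / ln (exp 1 + 1 / r)"
proof -
  obtain c0 where c0: "\<forall>z\<in>unitB. \<forall>y\<in>unitB. z \<noteq> y \<longrightarrow> \<bar>p z - p y\<bar> \<le> c0 / ln (exp 1 + 1 / pdist z y)"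
    using assms unfolding Plog_def by blast
  show ?thesis
  proof (rule that[of "max c0 0"])
    fix z y :: "'n cvec" and r :: real assume z: "z \<in> unitB" and y: "y \<in> unitB" and r: "pdist z y < r"
    have "0 < r" using r pdist_nonneg[of z y] by linarith
    then have Lr: "1 \<le> ln (exp 1 + 1 / r)" by (simp add: ln_exp1_plus_ge_1)
    show "\<bar>p z - p y\<bar> \<le> max c0 0 / ln (exp 1 + 1 / r)"
    proof (cases "y = z")
      case False
      then have d: "0 < pdist z y" using pdist_eq_0_imp_eq pdist_nonneg[of z y] by force
      have "c0 / ln (exp 1 + 1 / pdist z y) \<le> max c0 0 / ln (exp 1 + 1 / pdist z y)"
        using ln_exp1_plus_ge_1[of "1 / pdist z y"] d by (intro divide_right_mono) auto
      also have "\<dots> \<le> max c0 0 / ln (exp 1 + 1 / r)"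
      proof (intro divide_left_mono)
        show "ln (exp 1 + 1 / r) \<le> ln (exp 1 + 1 / pdist z y)"
          using r d by (intro ln_mono add_left_mono divide_left_mono) (auto intro: add_pos_nonneg)
        then show "0 < ln (exp 1 + 1 / pdist z y) * ln (exp 1 + 1 / r)" using Lr by simp
      qed simp
      finally have "c0 / ln (exp 1 + 1 / pdist z y) \<le> max c0 0 / ln (exp 1 + 1 / r)" .
      then show ?thesis using c0 z y False by force
    qed (use Lr in simp)
  qed simp
qed

lemma Plog_lower_bound:
  fixes p :: "('n::finite) cvec \<Rightarrow> real"
  assumes "Plog \<alpha> p"
  obtains p0 where "1 < p0" "\<And>z. z \<in> unitB \<Longrightarrow> p0 \<le> p z"
proof -
  obtain p0 where p0: "1 < p0" "AE z in mu_alpha \<alpha>. p0 \<le> p z"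
    using assms unfolding Plog_def by blast
  obtain c where c: "0 \<le> c"
    "\<And>z y r. z \<in> unitB \<Longrightarrow> y \<in> unitB \<Longrightarrow> pdist z y < r \<Longrightarrow> \<bar>p z - p y\<bar> \<le> c / ln (exp 1 + 1 / r)"
    using Plog_oscillation[OF assms] by blast
  have "p0 \<le> p z" if z: "z \<in> unitB" for z
  proof (rule field_le_epsilon)
    fix \<epsilon> :: real assume \<epsilon>: "0 < \<epsilon>"
    define e where "e = min (1 - norm z) (exp (- c / \<epsilon>))"
    have e: "0 < e" "e \<le> 1 - norm z" using z by (auto simp: e_def unitB_def)
    obtain y where y: "y \<in> pball z e" "p0 \<le> p y"
      using AE_positive_measure_witness[OF p0(2) emeasure_pball_pos[OF z e]] by blast
    have "ln e \<le> ln (exp (- c / \<epsilon>))" using e(1) by (intro ln_mono) (auto simp: e_def)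
    then have "c / \<epsilon> \<le> ln (1 / e)" using e(1) by (simp add: ln_div)
    also have "\<dots> \<le> ln (exp 1 + 1 / e)" using e by (intro ln_mono) auto
    finally have "c / ln (exp 1 + 1 / e) \<le> \<epsilon>"
      using \<epsilon> ln_exp1_plus_ge_1[of "1 / e"] e by (simp add: divide_le_eq mult.commute)
    moreover have "\<bar>p z - p y\<bar> \<le> c / ln (exp 1 + 1 / e)"
      using y z by (intro c(2)) (auto simp: pball_def)
    ultimately show "p0 \<le> p z + \<epsilon>" using y by linarith
  qed
  then show ?thesis using p0(1) that by blast
qed

section \<open>Luxemburg norms and the class B_p\<close>

lemma vnorm_less_imp:
  assumes "vnorm \<alpha> p v f < y"
  obtains t where "0 < t" "ennreal t < y"
    "(\<integral>\<^sup>+ z. ennreal (\<bar>f z / t\<bar> powr p z * v z) \<partial>mu_alpha \<alpha>) \<le> 1"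
  using assms unfolding vnorm_def by (auto simp: Inf_less_iff)

lemma vnorm_eq_0_imp_modular_eq_0:
  fixes f p v :: "('n::finite) cvec \<Rightarrow> real"
  assumes "vnorm \<alpha> p v f = 0" and "AE z in mu_alpha \<alpha>. 1 \<le> p z" and "\<And>z. 0 \<le> v z"
    and [measurable]: "f \<in> borel_measurable borel" "p \<in> borel_measurable borel" "v \<in> borel_measurable borel"
  shows "(\<integral>\<^sup>+ z. ennreal (\<bar>f z\<bar> powr p z * v z) \<partial>mu_alpha \<alpha>) = 0"
proof -
  have "(\<integral>\<^sup>+ z. ennreal (\<bar>f z\<bar> powr p z * v z) \<partial>mu_alpha \<alpha>) \<le> 0"
  proof (rule ennreal_le_epsilon)
    fix e :: real assume "0 < e"
    then obtain t where t: "0 < t" "t < min e 1"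
      and modular: "(\<integral>\<^sup>+ z. ennreal (\<bar>f z / t\<bar> powr p z * v z) \<partial>mu_alpha \<alpha>) \<le> 1"
      using vnorm_less_imp[of \<alpha> p v f "ennreal (min e 1)"] assms(1) by (auto simp: ennreal_less_iff)
    have "(\<integral>\<^sup>+ z. ennreal (\<bar>f z\<bar> powr p z * v z) \<partial>mu_alpha \<alpha>)
          \<le> (\<integral>\<^sup>+ z. ennreal t * ennreal (\<bar>f z / t\<bar> powr p z * v z) \<partial>mu_alpha \<alpha>)"
    proof (intro nn_integral_mono_AE, use assms(2) in \<open>elim AE_mp\<close>, intro AE_I2 impI)
      fix z assume p: "1 \<le> p z"
      define X where "X = \<bar>f z\<bar> powr p z * v z"
      have X: "0 \<le> X / t powr p z" using assms(3)[of z] by (simp add: X_def)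
      have "t powr p z \<le> t powr 1" using t p by (intro powr_mono') auto
      then have "X \<le> t * (X / t powr p z)"
        using mult_right_mono[OF _ X, of "t powr p z" t] t by simp
      then have "\<bar>f z\<bar> powr p z * v z \<le> t * (\<bar>f z / t\<bar> powr p z * v z)"
        using t by (simp add: X_def powr_divide abs_divide)
      then show "ennreal (\<bar>f z\<bar> powr p z * v z) \<le> ennreal t * ennreal (\<bar>f z / t\<bar> powr p z * v z)"
        using t assms(3)[of z] by (simp add: ennreal_mult[symmetric] ennreal_leI)
    qed
    also have "\<dots> = ennreal t * (\<integral>\<^sup>+ z. ennreal (\<bar>f z / t\<bar> powr p z * v z) \<partial>mu_alpha \<alpha>)"
      by (rule nn_integral_cmult) measurable
    also have "\<dots> \<le> ennreal t" using modular mult_left_mono[OF modular, of "ennreal t"] by simp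
    also have "\<dots> \<le> 0 + ennreal e" using t by simp
    finally show "(\<integral>\<^sup>+ z. ennreal (\<bar>f z\<bar> powr p z * v z) \<partial>mu_alpha \<alpha>) \<le> 0 + ennreal e" .
  qed
  then show ?thesis by simp
qed

lemma vnorm_weight_unitB_pos:
  fixes p w :: "('n::finite) cvec \<Rightarrow> real"
  assumes "Plog \<alpha> p" and "weight \<alpha> w"
  shows "0 < vnorm \<alpha> p (\<lambda>_. 1) (\<lambda>y. w y powr (1 / p y) * indicator unitB y)"
proof (rule ccontr)
  obtain p0 where p0: "1 < p0" "AE z in mu_alpha \<alpha>. p0 \<le> p z"
    using assms(1) unfolding Plog_def by blast
  have [measurable]: "p \<in> borel_measurable borel" "w \<in> borel_measurable borel"
    and w: "AE z in mu_alpha \<alpha>. 0 < w z"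
    using assms unfolding Plog_def weight_def by auto
  assume "\<not> ?thesis"
  then have "(\<integral>\<^sup>+ y. ennreal (\<bar>w y powr (1 / p y) * indicator unitB y\<bar> powr p y * 1) \<partial>mu_alpha \<alpha>) = 0"
    using p0 by (intro vnorm_eq_0_imp_modular_eq_0) (auto elim: AE_mp)
  then have "AE y in mu_alpha \<alpha>. \<bar>w y powr (1 / p y) * indicator unitB y\<bar> powr p y = 0"
    by (simp add: nn_integral_0_iff_AE)
  with w have "AE y in mu_alpha \<alpha>. 0 < w y \<and> \<bar>w y powr (1 / p y) * indicator unitB y\<bar> powr p y = 0"
    by (simp add: AE_conj_iff)
  then have "AE y in mu_alpha \<alpha>. y \<notin> (unitB :: 'n cvec set)"
    by (rule AE_mp) (auto intro!: AE_I2 simp: indicator_def)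
  then obtain y where "y \<in> (unitB :: 'n cvec set)" "y \<notin> unitB"
    using emeasure_mu_alpha_unitB_pos by (rule AE_positive_measure_witness)
  then show False by simp
qed

lemma Bp_dual_modular_le_1:
  fixes p w :: "('n::finite) cvec \<Rightarrow> real"
  assumes "0 < \<alpha>" "Plog \<alpha> p" "Bp_class \<alpha> p w"
  obtains s where "0 < s"
    "(\<integral>\<^sup>+ z. ennreal (\<bar>w z powr (- 1 / p z) * indicator unitB z / s\<bar> powr conj_exp (p z) * 1) \<partial>mu_alpha \<alpha>) \<le> 1"
proof -
  define N1 where "N1 = vnorm \<alpha> p (\<lambda>_. 1) (\<lambda>y. w y powr (1 / p y) * indicator (unitB :: 'n cvec set) y)"
  define N2 where "N2 = vnorm \<alpha> (\<lambda>y. conj_exp (p y)) (\<lambda>_. 1) (\<lambda>y. w y powr (- 1 / p y) * indicator (unitB :: 'n cvec set) y)"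
  obtain M where M: "\<forall>z\<in>unitB. \<forall>r. r > 1 - norm z \<longrightarrow>
      (1 / emeasure (mu_alpha \<alpha>) (pball z r))
       * vnorm \<alpha> p (\<lambda>_. 1) (\<lambda>y. w y powr (1 / p y) * indicator (pball z r) y)
       * vnorm \<alpha> (\<lambda>y. conj_exp (p y)) (\<lambda>_. 1) (\<lambda>y. w y powr (- 1 / p y) * indicator (pball z r) y)
       \<le> ennreal M"
    using assms(3) unfolding Bp_class_def by blast
  have bound: "(1 / emeasure (mu_alpha \<alpha>) (unitB :: 'n cvec set)) * N1 * N2 \<le> ennreal M"
    using M[rule_format, of 0 4] unfolding N1_def N2_def pball_0_4 by (simp add: unitB_def)
  have "0 < N1" unfolding N1_def
    using assms(2,3) by (intro vnorm_weight_unitB_pos) (auto simp: Bp_class_def)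
  moreover have "1 / emeasure (mu_alpha \<alpha>) (unitB :: 'n cvec set) \<noteq> 0"
    using emeasure_mu_alpha_unitB_finite[OF assms(1), where 'n='n] by simp
  ultimately have "N2 = \<infinity> \<Longrightarrow> (1 / emeasure (mu_alpha \<alpha>) (unitB :: 'n cvec set)) * N1 * N2 = \<infinity>"
    by (simp add: ennreal_mult_top)
  then have "N2 < \<infinity>" using bound by (auto simp: less_top[symmetric] top_unique)
  then show ?thesis using that vnorm_less_imp unfolding N2_def by blast
qed

lemma nn_integral_unitB_le_of_modulars:
  fixes p w g :: "('n::finite) cvec \<Rightarrow> real"
  assumes [measurable]: "p \<in> borel_measurable borel" "w \<in> borel_measurable borel" "g \<in> borel_measurable borel"
    and pw: "AE z in mu_alpha \<alpha>. 1 < p z \<and> 0 < w z" and "\<And>z. 0 \<le> w z" "\<And>z. 0 \<le> g z"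
    and ts: "0 < t" "0 < s"
    and F: "(\<integral>\<^sup>+ z. ennreal (\<bar>g z / t\<bar> powr p z * w z) \<partial>mu_alpha \<alpha>) \<le> 1"
    and G: "(\<integral>\<^sup>+ z. ennreal (\<bar>w z powr (- 1 / p z) * indicator unitB z / s\<bar> powr conj_exp (p z) * 1) \<partial>mu_alpha \<alpha>) \<le> 1"
  shows "(\<integral>\<^sup>+ z \<in> unitB. ennreal (g z) \<partial>mu_alpha \<alpha>) \<le> ennreal (2 * t * s)"
proof -
  define F where "F z = \<bar>g z / t\<bar> powr p z * w z" for z
  define G where "G z = \<bar>w z powr (- 1 / p z) * indicator (unitB :: 'n cvec set) z / s\<bar> powr conj_exp (p z) * 1" for z
  have FG: "0 \<le> F z" "0 \<le> G z" for z using assms(5) by (auto simp: F_def G_def)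
  have "ennreal (g z) * indicator unitB z \<le> ennreal (t * s) * (ennreal (F z) + ennreal (G z))"
    if "1 < p z \<and> 0 < w z" for z
  proof (cases "z \<in> unitB")
    case True
    have "g z \<le> t * s * (F z + G z)"
      using young_weighted[of "p z" "w z" "g z" t s] that assms(6) ts True by (simp add: F_def G_def)
    then show ?thesis using True ts FG[of z] by (simp add: ennreal_mult[symmetric] flip: ennreal_plus)
  qed simp
  then have "(\<integral>\<^sup>+ z \<in> unitB. ennreal (g z) \<partial>mu_alpha \<alpha>)
             \<le> (\<integral>\<^sup>+ z. ennreal (t * s) * (ennreal (F z) + ennreal (G z)) \<partial>mu_alpha \<alpha>)"
    using pw by (intro nn_integral_mono_AE) (auto elim!: AE_mp)
  also have "\<dots> = ennreal (t * s) * ((\<integral>\<^sup>+ z. ennreal (F z) \<partial>mu_alpha \<alpha>) + (\<integral>\<^sup>+ z. ennreal (G z) \<partial>mu_alpha \<alpha>))"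
    by (simp add: F_def G_def conj_exp_def nn_integral_cmult nn_integral_add)
  also have "\<dots> \<le> ennreal (t * s) * 2"
    using F G mult_left_mono[OF add_mono, of _ 1 _ 1 "ennreal (t * s)"]
    by (simp add: F_def G_def one_add_one)
  also have "\<dots> = ennreal (t * s * 2)" using ts by (simp add: ennreal_mult)
  finally show ?thesis by (simp add: mult_ac)
qed

lemma nn_integral_unitB_le_of_vnorm_eq_1:
  fixes p w :: "('n::finite) cvec \<Rightarrow> real"
  assumes "0 < \<alpha>" "Plog \<alpha> p" "Bp_class \<alpha> p w"
  obtains C0 where "0 < C0"
    "\<And>g. g \<in> borel_measurable lborel \<Longrightarrow> (\<forall>y. 0 \<le> g y) \<Longrightarrow> vnorm \<alpha> p w g = 1 \<Longrightarrow>
       (\<integral>\<^sup>+ y \<in> unitB. ennreal (g y) \<partial>mu_alpha \<alpha>) \<le> ennreal C0"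
proof -
  obtain p0 where p0: "1 < p0" "AE z in mu_alpha \<alpha>. p0 \<le> p z"
    using assms(2) unfolding Plog_def by blast
  have meas: "p \<in> borel_measurable borel" "w \<in> borel_measurable borel"
    and w: "\<And>z. 0 \<le> w z" "AE z in mu_alpha \<alpha>. 0 < w z"
    using assms(2,3) unfolding Plog_def Bp_class_def weight_def by auto
  then have pw: "AE z in mu_alpha \<alpha>. 1 < p z \<and> 0 < w z"
    using p0 by (auto elim: AE_mp)
  obtain s where s: "0 < s"
    "(\<integral>\<^sup>+ z. ennreal (\<bar>w z powr (- 1 / p z) * indicator unitB z / s\<bar> powr conj_exp (p z) * 1) \<partial>mu_alpha \<alpha>) \<le> 1"
    using Bp_dual_modular_le_1[OF assms] by blast
  show ?thesis
  proof (rule that[of "4 * s"])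
    show "0 < 4 * s" using s by simp
    fix g :: "'n cvec \<Rightarrow> real"
    assume g: "g \<in> borel_measurable lborel" "\<forall>y. 0 \<le> g y" "vnorm \<alpha> p w g = 1"
    then obtain t where t: "0 < t" "t < 2" "(\<integral>\<^sup>+ z. ennreal (\<bar>g z / t\<bar> powr p z * w z) \<partial>mu_alpha \<alpha>) \<le> 1"
      using vnorm_less_imp[of \<alpha> p w g 2] by (auto simp: ennreal_less_iff)
    then have "(\<integral>\<^sup>+ y \<in> unitB. ennreal (g y) \<partial>mu_alpha \<alpha>) \<le> ennreal (2 * t * s)"
      using meas g pw w(1) s by (intro nn_integral_unitB_le_of_modulars) auto
    also have "\<dots> \<le> ennreal (4 * s)" using t s by (intro ennreal_leI) simp
    finally show "(\<integral>\<^sup>+ y \<in> unitB. ennreal (g y) \<partial>mu_alpha \<alpha>) \<le> ennreal (4 * s)" .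
  qed
qed

lemma Bk_emeasure_integral_bounds:
  fixes g :: "('n::finite) cvec \<Rightarrow> real"
  assumes "0 < \<alpha>" and "g \<in> borel_measurable borel"
    and "(\<integral>\<^sup>+ y \<in> unitB. ennreal (g y) \<partial>mu_alpha \<alpha>) \<le> ennreal C0" "0 \<le> C0"
    and "ennreal b \<le> emeasure (mu_alpha \<alpha>) (Bk k z)"
  obtains m I where "emeasure (mu_alpha \<alpha>) (Bk k z) = ennreal m" "b \<le> m"
    "(\<integral>\<^sup>+ y \<in> Bk k z. ennreal (g y) \<partial>mu_alpha \<alpha>) = ennreal I" "0 \<le> I" "I \<le> C0"
proof -
  have Bk: "Bk k z \<subseteq> unitB" by (simp add: Bk_eq_pball pball_subset_unitB)
  then have "emeasure (mu_alpha \<alpha>) (Bk k z) \<le> emeasure (mu_alpha \<alpha>) (unitB :: 'n cvec set)"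
    by (intro emeasure_mono) (auto simp: sets_mu_alpha)
  then obtain m where m: "emeasure (mu_alpha \<alpha>) (Bk k z) = ennreal m" "0 \<le> m"
    using emeasure_mu_alpha_unitB_finite[OF assms(1), where 'n='n]
    by (cases "emeasure (mu_alpha \<alpha>) (Bk k z)" rule: ennreal_cases) auto
  have "(\<integral>\<^sup>+ y \<in> Bk k z. ennreal (g y) \<partial>mu_alpha \<alpha>) \<le> (\<integral>\<^sup>+ y \<in> unitB. ennreal (g y) \<partial>mu_alpha \<alpha>)"
    using Bk by (intro nn_integral_mono) (auto simp: indicator_def)
  then have I: "(\<integral>\<^sup>+ y \<in> Bk k z. ennreal (g y) \<partial>mu_alpha \<alpha>) \<le> ennreal C0"
    using assms(3) by (rule order_trans)
  then obtain I where "(\<integral>\<^sup>+ y \<in> Bk k z. ennreal (g y) \<partial>mu_alpha \<alpha>) = ennreal I" "0 \<le> I"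
    by (cases "\<integral>\<^sup>+ y \<in> Bk k z. ennreal (g y) \<partial>mu_alpha \<alpha>" rule: ennreal_cases) (auto simp: top_unique)
  moreover have "b \<le> m" "I \<le> C0"
    using assms(4,5) m I calculation by (auto simp: ennreal_le_iff2)
  ultimately show ?thesis using that m by blast
qed

lemma Rk_powr_le_at:
  fixes p g :: "('n::finite) cvec \<Rightarrow> real"
  assumes "0 < \<alpha>" "0 < k" "k \<le> 1" and z: "z \<in> unitB"
    and g: "g \<in> borel_measurable borel" "\<And>y. 0 \<le> g y"
      "(\<integral>\<^sup>+ y \<in> unitB. ennreal (g y) \<partial>mu_alpha \<alpha>) \<le> ennreal C0" "0 < C0"
    and p: "p \<in> borel_measurable borel" "1 < p0" "\<And>y. y \<in> unitB \<Longrightarrow> p0 \<le> p y"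
    and osc: "0 \<le> c" "\<And>y r. y \<in> unitB \<Longrightarrow> pdist z y < r \<Longrightarrow> \<bar>p z - p y\<bar> \<le> c / ln (exp 1 + 1 / r)"
    and Bk: "0 < b" "0 \<le> N" "ennreal (b * (1 - norm z) powr N) \<le> emeasure (mu_alpha \<alpha>) (Bk k z)"
  shows "Rk \<alpha> k g z < \<infinity> \<and>
         ennreal (enn2real (Rk \<alpha> k g z) powr p z)
           \<le> ennreal (exp (c * (\<bar>ln (C0 / b)\<bar> + N))) * (Rk \<alpha> k (\<lambda>y. g y powr p y) z + 1)"
proof -
  define t where "t = 1 - norm z"
  have t: "0 < t" "t \<le> 1" using z by (auto simp: t_def unitB_def)
  obtain m I where m: "emeasure (mu_alpha \<alpha>) (Bk k z) = ennreal m" "b * t powr N \<le> m"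
    and I: "(\<integral>\<^sup>+ y \<in> Bk k z. ennreal (g y) \<partial>mu_alpha \<alpha>) = ennreal I" "0 \<le> I" "I \<le> C0"
    using Bk_emeasure_integral_bounds[OF assms(1) g(1,3) _ Bk(3)] g(4) by (auto simp: t_def)
  have "0 < b * t powr N" using Bk(1) t by simp
  then have m0: "0 < m" using m(2) by linarith
  define A where "A = I / m"
  have Rk: "Rk \<alpha> k g z = ennreal A"
    using I m0 by (simp add: Rk_def m(1) A_def divide_ennreal)
  have A: "A \<le> (C0 / b) / t powr N"
  proof -
    have "A \<le> C0 / m" unfolding A_def using I m0 by (intro divide_right_mono) auto
    also have "\<dots> \<le> C0 / (b * t powr N)" using m(2) m0 g(4) Bk(1) t by (intro divide_left_mono) auto
    finally show ?thesis by simp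
  qed
  define \<Delta> where "\<Delta> = c / ln (exp 1 + 1 / (k * t))"
  have "p z - \<Delta> \<le> p y" if "y \<in> Bk k z" for y
    using osc(2)[of y "k * t"] that by (auto simp: Bk_def t_def \<Delta>_def)
  then have "ennreal (A powr max p0 (p z - \<Delta>)) \<le> Rk \<alpha> k (\<lambda>y. g y powr p y) z + 1"
    unfolding Rk_def A_def
    using p I(1,2) m m0 g(1,2) by (intro set_average_powr_le) (auto simp: sets_mu_alpha Bk_def)
  moreover have "1 < A \<Longrightarrow> A powr \<Delta> \<le> exp (c * (\<bar>ln (C0 / b)\<bar> + N))"
    unfolding \<Delta>_def using A g(4) Bk(1,2) osc(1) t assms(2,3)
    by (intro powr_log_decay_le) (auto simp: mult_le_cancel_right1)
  ultimately have "ennreal (A powr p z) \<le> ennreal (exp (c * (\<bar>ln (C0 / b)\<bar> + N))) * (Rk \<alpha> k (\<lambda>y. g y powr p y) z + 1)"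
    using p(2) p(3)[OF z] I(2) m0 osc(1) Bk(2) by (intro ennreal_powr_le_split) (auto simp: A_def)
  then show ?thesis using Rk I(2) m0 by (simp add: A_def)
qed

theorem mainTheorem15:
  fixes p w :: "('n::finite) cvec \<Rightarrow> real" and \<alpha> k :: real
  assumes "\<alpha> > 0" and "Plog \<alpha> p" and "0 < k" and "k < 1/2" and "Bp_class \<alpha> p w"
  shows "\<exists>C > 0. \<forall>g :: 'n cvec \<Rightarrow> real.
           g \<in> borel_measurable lborel \<longrightarrow> (\<forall>y. g y \<ge> 0) \<longrightarrow> vnorm \<alpha> p w g = 1 \<longrightarrow>
           (\<forall>z\<in>unitB. Rk \<alpha> k g z < \<infinity> \<and>
              ennreal (enn2real (Rk \<alpha> k g z) powr p z)
                \<le> ennreal C * (Rk \<alpha> k (\<lambda>y. g y powr p y) z + 1))"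
proof -
  obtain C0 where C0: "0 < C0" "\<And>g. g \<in> borel_measurable lborel \<Longrightarrow> (\<forall>y. 0 \<le> g y) \<Longrightarrow>
      vnorm \<alpha> p w g = 1 \<Longrightarrow> (\<integral>\<^sup>+ y \<in> unitB. ennreal (g y) \<partial>mu_alpha \<alpha>) \<le> ennreal C0"
    using nn_integral_unitB_le_of_vnorm_eq_1[OF assms(1,2,5)] by blast
  obtain p0 where p0: "1 < p0" "\<And>z. z \<in> unitB \<Longrightarrow> p0 \<le> p z"
    using Plog_lower_bound[OF assms(2)] by blast
  obtain c where c: "0 \<le> c"
    "\<And>z y r. z \<in> unitB \<Longrightarrow> y \<in> unitB \<Longrightarrow> pdist z y < r \<Longrightarrow> \<bar>p z - p y\<bar> \<le> c / ln (exp 1 + 1 / r)"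
    using Plog_oscillation[OF assms(2)] by blast
  obtain b N where b: "0 < b" "0 \<le> N"
    "\<And>z :: 'n cvec. z \<in> unitB \<Longrightarrow> ennreal (b * (1 - norm z) powr N) \<le> emeasure (mu_alpha \<alpha>) (Bk k z)"
    using emeasure_Bk_ge[OF assms(3) less_imp_le[OF assms(4)]] by blast
  have p: "p \<in> borel_measurable borel" using assms(2) by (simp add: Plog_def)
  have "Rk \<alpha> k g z < \<infinity> \<and> ennreal (enn2real (Rk \<alpha> k g z) powr p z)
          \<le> ennreal (exp (c * (\<bar>ln (C0 / b)\<bar> + N))) * (Rk \<alpha> k (\<lambda>y. g y powr p y) z + 1)"
    if "g \<in> borel_measurable lborel" "\<forall>y. 0 \<le> g y" "vnorm \<alpha> p w g = 1" "z \<in> unitB" for g z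
    using that assms(1,3,4) C0 p0 c b p by (intro Rk_powr_le_at) auto
  then show ?thesis by (intro exI[of _ "exp (c * (\<bar>ln (C0 / b)\<bar> + N))"]) auto
qed

end
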